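(* Let $V=V_0+V_1$ with $V_0\in L^\infty(\mathbb{R})$, $\operatorname{ess\,inf}V_0>0$, and $V_1\in\mathcal{M}_1(\mathbb{R})$. Then the function $a\mapsto F(a;V)$ is continuous on $\mathbb{R}$.
   Context: Elements of $H^1(\mathbb{R})$ are identified with their continuous representatives; $\|u\|_\infty:=\|u\|_{L^\infty(\mathbb{R})}$. $\mathcal{M}_1(\mathbb{R})$ is the set of signed Radon measures on $\mathbb{R}$ with finite total variation. The potential $V=V_0+V_1$ acts as the bilinear form $V(u,v):=\int_{\mathbb{R}}V_0uv\,dx+\int_{\mathbb{R}}uv\,dV_1$ on $H^1(\mathbb{R})$, and $I(u;V):=\|u'\|_{L^2(\mathbb{R})}^2+V(u,u)$. For $a\in\mathbb{R}$, $K_a:=\{u\in H^1(\mathbb{R}):u(a)=\|u\|_\infty=1\}$ and $F(a;V):=\inf_{u\in K_a}I(u;V)$. *)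

theory Defs
  imports "HOL-Analysis.Analysis"
begin

definition weak_deriv :: "(real \<Rightarrow> real) \<Rightarrow> (real \<Rightarrow> real) \<Rightarrow> bool" where
  "weak_deriv u g \<longleftrightarrow> g \<in> borel_measurable borel \<and>
     (\<forall>x y. x \<le> y \<longrightarrow> set_integrable lborel {x..y} g \<and>
        u y - u x = (LINT t:{x..y}|lborel. g t))"

text \<open>The Sobolev space H^1(R), elements identified with continuous representatives.\<close>
definition H1 :: "(real \<Rightarrow> real) set" where
  "H1 = {u. u \<in> borel_measurable borel \<and> integrable lborel (\<lambda>x. (u x)\<^sup>2) \<and>
            (\<exists>g. weak_deriv u g \<and> integrable lborel (\<lambda>x. (g x)\<^sup>2))}"

text \<open>The (a.e. unique) L^2 weak derivative u'.\<close>
definition wderiv :: "(real \<Rightarrow> real) \<Rightarrow> (real \<Rightarrow> real)" where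
  "wderiv u = (SOME g. weak_deriv u g \<and> integrable lborel (\<lambda>x. (g x)\<^sup>2))"

text \<open>The signed finite measure V1 is given by its Jordan decomposition V1 = M1 - M2,
  M1, M2 finite Borel measures on R.  The bilinear form
  V(u,v) = int V0 u v dx + int u v dV1.\<close>
definition Vform :: "(real \<Rightarrow> real) \<Rightarrow> real measure \<Rightarrow> real measure
                     \<Rightarrow> (real \<Rightarrow> real) \<Rightarrow> (real \<Rightarrow> real) \<Rightarrow> real" where
  "Vform V0 M1 M2 u v = (\<integral>x. V0 x * u x * v x \<partial>lborel)
      + ((\<integral>x. u x * v x \<partial>M1) - (\<integral>x. u x * v x \<partial>M2))"

definition Ifun :: "(real \<Rightarrow> real) \<Rightarrow> (real \<Rightarrow> real) \<Rightarrow> real measure \<Rightarrow> real measure \<Rightarrow> real" where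
  "Ifun u V0 M1 M2 = (\<integral>x. (wderiv u x)\<^sup>2 \<partial>lborel) + Vform V0 M1 M2 u u"

text \<open>K_a = {u in H1 : u(a) = ||u||_inf = 1}; for continuous u the L^inf norm is the sup norm.\<close>
definition Kset :: "real \<Rightarrow> (real \<Rightarrow> real) set" where
  "Kset a = {u \<in> H1. u a = 1 \<and> (\<forall>x. \<bar>u x\<bar> \<le> 1)}"

definition Ffun :: "real \<Rightarrow> (real \<Rightarrow> real) \<Rightarrow> real measure \<Rightarrow> real measure \<Rightarrow> real" where
  "Ffun a V0 M1 M2 = (INF u\<in>Kset a. Ifun u V0 M1 M2)"

end

theory Submission
  imports Defs
begin

text \<open>Let \<open>u\<close> almost minimise \<open>I\<close> on \<open>K_a\<close> and let \<open>b\<close> be close to \<open>a\<close>. Composing \<open>u\<close> with a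
  piecewise affine map that sends \<open>b\<close> to \<open>a\<close> and is the identity outside \<open>[a-1,a+1]\<close> gives an
  element of \<open>K_b\<close> whose Dirichlet energy is larger by at most the factor \<open>1/(1-|b-a|)\<close>. Since an
  \<open>H\<^sup>1\<close> function of energy \<open>G\<close> is \<open>1/2\<close>-Hoelder with constant \<open>(G+1)/2\<close> and the map moves points
  by at most \<open>|b-a|\<close>, the squares of the two functions differ by \<open>O(\<surd>|b-a|)\<close>, and only on
  \<open>[a-1,a+1]\<close>; so the potential term changes by \<open>O(\<surd>|b-a|)\<close> as well. This gives
  \<open>F(b) \<le> F(a) + L \<surd>|b-a|\<close> with \<open>L\<close> depending only on \<open>F(a)\<close>, and exchanging the roles of \<open>a\<close>
  and \<open>b\<close> shows that \<open>F\<close> is locally \<open>1/2\<close>-Hoelder continuous.\<close>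

section \<open>Weak derivatives on subsets of the line\<close>

definition weak_deriv_on :: "(real \<Rightarrow> real) \<Rightarrow> (real \<Rightarrow> real) \<Rightarrow> real set \<Rightarrow> bool" where
  "weak_deriv_on u g S \<longleftrightarrow> (\<forall>x y. x \<le> y \<longrightarrow> {x..y} \<subseteq> S \<longrightarrow>
      set_integrable lborel {x..y} g \<and> u y - u x = (LINT t:{x..y}|lborel. g t))"

lemma weak_deriv_iff_on_UNIV:
  "weak_deriv u g \<longleftrightarrow> g \<in> borel_measurable borel \<and> weak_deriv_on u g UNIV"
  unfolding weak_deriv_def weak_deriv_on_def by auto

lemma weak_deriv_on_subset: "weak_deriv_on u g S \<Longrightarrow> T \<subseteq> S \<Longrightarrow> weak_deriv_on u g T"
  unfolding weak_deriv_on_def by blast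

lemma Icc_subset_Un_cases:
  fixes x y c :: real
  assumes "{x..y} \<subseteq> A \<union> B" "x \<le> y" "\<forall>z\<in>A. z \<le> c" "\<forall>z\<in>B. c \<le> z" "c \<in> A" "c \<in> B"
  shows "{x..y} \<subseteq> A \<or> {x..y} \<subseteq> B \<or> (x \<le> c \<and> c \<le> y \<and> {x..c} \<subseteq> A \<and> {c..y} \<subseteq> B)"
  using assms unfolding subset_iff Ball_def atLeastAtMost_iff Un_iff by (smt (verit))

lemma weak_deriv_on_Un:
  assumes A: "weak_deriv_on u g A" and B: "weak_deriv_on u g B"
    and "\<forall>x\<in>A. x \<le> c" and "\<forall>x\<in>B. c \<le> x" and "c \<in> A" and "c \<in> B"
  shows "weak_deriv_on u g (A \<union> B)"
  unfolding weak_deriv_on_def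
proof (intro allI impI)
  fix x y :: real assume xy: "x \<le> y" and sub: "{x..y} \<subseteq> A \<union> B"
  consider "{x..y} \<subseteq> A" | "{x..y} \<subseteq> B" | "x \<le> c" "c \<le> y" "{x..c} \<subseteq> A" "{c..y} \<subseteq> B"
    using Icc_subset_Un_cases[OF sub xy assms(3-6)] by blast
  then show "set_integrable lborel {x..y} g \<and> u y - u x = (LINT t:{x..y}|lborel. g t)"
  proof cases
    case 3
    have i1: "set_integrable lborel {x..c} g" "u c - u x = (LINT t:{x..c}|lborel. g t)"
      using A 3 unfolding weak_deriv_on_def by blast+
    have i2: "set_integrable lborel {c..y} g" "u y - u c = (LINT t:{c..y}|lborel. g t)"
      using B 3 unfolding weak_deriv_on_def by blast+
    have un: "{x..y} = {x..c} \<union> {c..y}" using 3 by auto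
    have overlap: "AE t in lborel. \<not> (t \<in> {x..c} \<and> t \<in> {c..y})"
      using AE_lborel_singleton[of c] by eventually_elim auto
    have "set_integrable lborel {x..y} g"
      unfolding un by (rule set_integrable_Un[OF i1(1) i2(1)]) auto
    moreover have "(LINT t:{x..y}|lborel. g t) = (LINT t:{x..c}|lborel. g t) + (LINT t:{c..y}|lborel. g t)"
      unfolding un by (rule set_integral_Un_AE[OF overlap _ _ i1(1) i2(1)]) auto
    ultimately show ?thesis using i1(2) i2(2) by simp
  qed (use A B xy in \<open>auto simp: weak_deriv_on_def\<close>)
qed

lemma weak_deriv_on_cong:
  assumes W: "weak_deriv_on u g S" and eq_u: "\<And>x. x \<in> S \<Longrightarrow> u' x = u x"
    and eq_g: "\<And>x. x \<in> S \<Longrightarrow> x \<notin> N \<Longrightarrow> g' x = g x" and "finite N"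
    and "g \<in> borel_measurable borel" and "g' \<in> borel_measurable borel"
  shows "weak_deriv_on u' g' S"
  unfolding weak_deriv_on_def
proof (intro allI impI)
  fix x y :: real assume xy: "x \<le> y" and sub: "{x..y} \<subseteq> S"
  have i: "set_integrable lborel {x..y} g" "u y - u x = (LINT t:{x..y}|lborel. g t)"
    using W xy sub unfolding weak_deriv_on_def by blast+
  have "AE t in lborel. t \<notin> N"
    using \<open>finite N\<close> by (rule finite_imp_null_set_lborel[THEN AE_not_in])
  then have ae: "AE t\<in>{x..y} in lborel. g' t = g t"
    by eventually_elim (use sub eq_g in auto)
  have meas: "g \<in> borel_measurable lborel" "g' \<in> borel_measurable lborel" using assms(5,6) by auto
  have "set_integrable lborel {x..y} g' = set_integrable lborel {x..y} g"
    by (rule set_integrable_cong_AE[OF meas(2,1) ae]) auto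
  moreover have "(LINT t:{x..y}|lborel. g' t) = (LINT t:{x..y}|lborel. g t)"
    by (rule set_lebesgue_integral_cong_AE[OF _ meas(2,1) ae]) auto
  moreover have "u' y - u' x = u y - u x"
    using sub xy by (simp add: eq_u subset_iff)
  ultimately show "set_integrable lborel {x..y} g' \<and> u' y - u' x = (LINT t:{x..y}|lborel. g' t)"
    using i by simp
qed

lemma weak_deriv_from_pieces:
  assumes "weak_deriv_on u g {..p}" "weak_deriv_on u g {p..q}"
    and "weak_deriv_on u g {q..r}" "weak_deriv_on u g {r..}"
    and "p \<le> q" "q \<le> r" and "g \<in> borel_measurable borel"
  shows "weak_deriv u g"
proof -
  have "weak_deriv_on u g ((({..p} \<union> {p..q}) \<union> {q..r}) \<union> {r..})"
    using assms
    by (intro weak_deriv_on_Un[where c = r] weak_deriv_on_Un[where c = q]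
        weak_deriv_on_Un[where c = p]) auto
  moreover have "(({..p} \<union> {p..q}) \<union> {q..r}) \<union> {r..} = UNIV" using assms(5,6) by auto
  ultimately show ?thesis using assms(7) by (simp add: weak_deriv_iff_on_UNIV)
qed

lemma weak_deriv_on_affine_comp:
  assumes W: "weak_deriv_on u g UNIV" and "\<alpha> > 0"
  shows "weak_deriv_on (\<lambda>x. u (\<alpha>*x+\<beta>)) (\<lambda>x. \<alpha> * g (\<alpha>*x+\<beta>)) UNIV"
  unfolding weak_deriv_on_def
proof (intro allI impI)
  fix x y :: real assume xy: "x \<le> y"
  define f where "f t = indicator {\<alpha>*x+\<beta>..\<alpha>*y+\<beta>} t * g t" for t
  have "\<alpha>*x+\<beta> \<le> \<alpha>*y+\<beta>" using xy \<open>\<alpha> > 0\<close> by simp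
  then have i: "integrable lborel f" "u (\<alpha>*y+\<beta>) - u (\<alpha>*x+\<beta>) = integral\<^sup>L lborel f"
    using W unfolding weak_deriv_on_def set_integrable_def set_lebesgue_integral_def f_def
    by auto
  have f_comp: "f (\<beta> + \<alpha> * t) = indicator {x..y} t * g (\<alpha>*t+\<beta>)" for t
    using \<open>\<alpha> > 0\<close> by (auto simp: f_def indicator_def algebra_simps)
  have "integrable lborel (\<lambda>t. indicator {x..y} t * g (\<alpha>*t+\<beta>))"
    using lborel_integrable_real_affine_iff[of \<alpha> f \<beta>] i(1) \<open>\<alpha> > 0\<close> unfolding f_comp by simp
  then show "set_integrable lborel {x..y} (\<lambda>t. \<alpha> * g (\<alpha>*t+\<beta>)) \<and>
        u (\<alpha>*y+\<beta>) - u (\<alpha>*x+\<beta>) = (LINT t:{x..y}|lborel. \<alpha> * g (\<alpha>*t+\<beta>))"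
    using i(2) lborel_integral_real_affine[of \<alpha> f \<beta>] \<open>\<alpha> > 0\<close>
    unfolding set_integrable_def set_lebesgue_integral_def f_comp
    by (simp add: algebra_simps)
qed

lemma weak_deriv_on_affine: "weak_deriv_on (\<lambda>x. p*x+q) (\<lambda>x. p) UNIV"
  unfolding weak_deriv_on_def
proof (intro allI impI conjI)
  fix x y :: real assume xy: "x \<le> y"
  have "integrable lborel (indicat_real {x..y})"
    by (simp add: integrable_indicator_iff emeasure_lborel_Icc_eq less_top[symmetric])
  then show "set_integrable lborel {x..y} (\<lambda>x. p)"
    unfolding set_integrable_def by simp
  show "p*y+q - (p*x+q) = (LINT t:{x..y}|lborel. p)"
    using xy by (simp add: set_integral_const algebra_simps)
qed

section \<open>Uniqueness of weak derivatives\<close>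

lemma AE_eq_0_if_Ioi_integrals_eq_0:
  fixes f :: "real \<Rightarrow> real"
  assumes f: "integrable lborel f" and zero: "\<And>s. (LINT t:{s<..}|lborel. f t) = 0"
  shows "AE t in lborel. f t = 0"
proof -
  define p where "p t = max (f t) 0" for t
  define q where "q t = max (- f t) 0" for t
  have [measurable]: "f \<in> borel_measurable borel" using f by auto
  have pq: "integrable lborel p" "integrable lborel q"
    using f unfolding p_def q_def by auto
  have restrict_Ioi: "integrable lborel (\<lambda>t. indicator {s<..} t * h t)"
    if "integrable lborel h" for h :: "real \<Rightarrow> real" and s
    using integrable_mult_indicator[of "{s<..}" lborel h] that by simp
  have density_Ioi: "emeasure (density lborel (\<lambda>t. ennreal (h t))) {s<..}
      = ennreal (LINT t:{s<..}|lborel. h t)"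
    if "integrable lborel h" "\<And>t. 0 \<le> h t" for h :: "real \<Rightarrow> real" and s
  proof -
    have [measurable]: "h \<in> borel_measurable borel" using that(1) by auto
    have "emeasure (density lborel (\<lambda>t. ennreal (h t))) {s<..}
        = (\<integral>\<^sup>+t. ennreal (indicator {s<..} t * h t) \<partial>lborel)"
      by (auto simp: emeasure_density intro!: nn_integral_cong split: split_indicator)
    also have "\<dots> = ennreal (LINT t:{s<..}|lborel. h t)"
      unfolding set_lebesgue_integral_def real_scaleR_def
      using restrict_Ioi that by (intro nn_integral_eq_integral) auto
    finally show ?thesis .
  qed
  have diff: "(LINT t:{s<..}|lborel. p t) - (LINT t:{s<..}|lborel. q t) = (LINT t:{s<..}|lborel. f t)" for s
  proof -
    have "(\<lambda>t. p t - q t) = f" by (auto simp: p_def q_def fun_eq_iff)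
    moreover have "set_integrable lborel {s<..} p" "set_integrable lborel {s<..} q"
      using pq restrict_Ioi unfolding set_integrable_def by auto
    ultimately show ?thesis by (metis set_integral_diff(2))
  qed
  have same_Ioi: "(LINT t:{s<..}|lborel. p t) = (LINT t:{s<..}|lborel. q t)" for s
    using diff[of s] zero[of s] by linarith
  have "\<And>t. 0 \<le> p t" "\<And>t. 0 \<le> q t" by (simp_all add: p_def q_def)
  then have "density lborel (\<lambda>t. ennreal (p t)) = density lborel (\<lambda>t. ennreal (q t))"
    by (intro measure_eqI_lessThan)
      (simp_all add: density_Ioi[OF pq(1)] density_Ioi[OF pq(2)] same_Ioi)
  then have "AE t in lborel. ennreal (p t) = ennreal (q t)"
    by (intro sigma_finite_measure.density_unique[OF sigma_finite_lborel])
      (auto simp: p_def q_def)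
  then show ?thesis
    by eventually_elim (auto simp: p_def q_def max_def split: if_splits)
qed

lemma AE_eq_0_if_Icc_integrals_eq_0:
  fixes f :: "real \<Rightarrow> real"
  assumes [measurable]: "f \<in> borel_measurable borel"
    and int: "\<And>x y. x \<le> y \<Longrightarrow> set_integrable lborel {x..y} f"
    and zero: "\<And>x y. x \<le> y \<Longrightarrow> (LINT t:{x..y}|lborel. f t) = 0"
  shows "AE t in lborel. f t = 0"
proof -
  have Ioc: "set_integrable lborel {x<..y} f \<and> (LINT t:{x<..y}|lborel. f t) = 0" for x y
  proof (cases "x \<le> y")
    case True
    have "AE t in lborel. (t \<in> {x..y}) = (t \<in> {x<..y})"
      using AE_lborel_singleton[of x] by eventually_elim auto
    then have "(LINT t:{x<..y}|lborel. f t) = (LINT t:{x..y}|lborel. f t)"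
      by (intro set_integral_cong_set) (auto simp: set_borel_measurable_def)
    moreover have "set_integrable lborel {x<..y} f"
      by (rule set_integrable_subset[OF int[OF True]]) auto
    ultimately show ?thesis using zero[OF True] by simp
  qed (auto simp: set_lebesgue_integral_def)
  have "AE t in lborel. indicator {-real n<..real n} t * f t = 0" for n :: nat
  proof (rule AE_eq_0_if_Ioi_integrals_eq_0)
    show "integrable lborel (\<lambda>t. indicator {-real n<..real n} t * f t)"
      using Ioc unfolding set_integrable_def by simp
    have restrict: "(\<lambda>t. indicator {s<..} t * (indicator {-real n<..real n} t * f t))
        = (\<lambda>t. indicator {max s (-real n)<..real n} t * f t)" for s
      by (auto simp: fun_eq_iff indicator_def)
    show "(LINT t:{s<..}|lborel. indicator {-real n<..real n} t * f t) = 0" for s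
      using Ioc[of "max s (-real n)" "real n"]
      unfolding set_lebesgue_integral_def real_scaleR_def restrict by simp
  qed
  then have "AE t in lborel. \<forall>n::nat. indicator {-real n<..real n} t * f t = 0"
    by (subst AE_all_countable) blast
  then show ?thesis
  proof eventually_elim
    case (elim t)
    obtain n :: nat where "\<bar>t\<bar> < real n" using reals_Archimedean2 by blast
    then show ?case using elim[rule_format, of n] by (auto simp: indicator_def)
  qed
qed

lemma weak_deriv_AE_unique:
  assumes "weak_deriv u g1" and "weak_deriv u g2"
  shows "AE x in lborel. g1 x = g2 x"
proof -
  have "AE x in lborel. g1 x - g2 x = 0"
    using assms unfolding weak_deriv_def
    by (intro AE_eq_0_if_Icc_integrals_eq_0) auto
  then show ?thesis by auto
qed

lemma H1_wderiv:
  assumes "u \<in> H1"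
  shows "weak_deriv u (wderiv u)" and "integrable lborel (\<lambda>x. (wderiv u x)\<^sup>2)"
proof -
  have "\<exists>g. weak_deriv u g \<and> integrable lborel (\<lambda>x. (g x)\<^sup>2)"
    using assms unfolding H1_def by auto
  then have "weak_deriv u (wderiv u) \<and> integrable lborel (\<lambda>x. (wderiv u x)\<^sup>2)"
    unfolding wderiv_def by (rule someI_ex)
  then show "weak_deriv u (wderiv u)" "integrable lborel (\<lambda>x. (wderiv u x)\<^sup>2)" by auto
qed

abbreviation grad_energy :: "(real \<Rightarrow> real) \<Rightarrow> real" where
  "grad_energy u \<equiv> (\<integral>x. (wderiv u x)\<^sup>2 \<partial>lborel)"

lemma grad_energy_eq:
  assumes "u \<in> H1" and "weak_deriv u g"
  shows "grad_energy u = (\<integral>x. (g x)\<^sup>2 \<partial>lborel)"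
proof -
  have "AE x in lborel. wderiv u x = g x"
    by (rule weak_deriv_AE_unique[OF H1_wderiv(1)[OF assms(1)] assms(2)])
  then show ?thesis
    by (intro integral_cong_AE) (use assms H1_wderiv[OF assms(1)] in \<open>auto simp: weak_deriv_def\<close>)
qed

section \<open>Hoelder continuity of \<open>H\<^sup>1\<close> functions\<close>

lemma weak_deriv_increment_le:
  assumes W: "weak_deriv u g" and g2: "integrable lborel (\<lambda>x. (g x)\<^sup>2)"
    and G: "(\<integral>x. (g x)\<^sup>2 \<partial>lborel) \<le> G" and "\<epsilon> > 0" and "x \<le> y"
  shows "\<bar>u y - u x\<bar> \<le> G/(2*\<epsilon>) + \<epsilon>*(y-x)/2"
proof -
  have [measurable]: "g \<in> borel_measurable borel" using W unfolding weak_deriv_def by auto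
  define I where "I = indicat_real {x..y}"
  have I: "integrable lborel I" "integral\<^sup>L lborel I = y - x"
    using \<open>x \<le> y\<close> unfolding I_def
    by (simp_all add: integrable_indicator_iff emeasure_lborel_Icc_eq less_top[symmetric])
  have gI: "integrable lborel (\<lambda>t. I t * g t)" "u y - u x = (\<integral>t. I t * g t \<partial>lborel)"
    using W \<open>x \<le> y\<close>
    unfolding weak_deriv_def set_integrable_def set_lebesgue_integral_def I_def by auto
  have g2I: "integrable lborel (\<lambda>t. I t * (g t)\<^sup>2)"
    by (rule Bochner_Integration.integrable_bound[OF g2]) (auto simp: I_def indicator_def)
  \<comment> \<open>AM-GM: \<open>2 \<epsilon> \<bar>g\<bar> \<le> g\<^sup>2 + \<epsilon>\<^sup>2\<close>\<close>
  have am_gm: "\<bar>g t\<bar> \<le> (g t)\<^sup>2/(2*\<epsilon>) + \<epsilon>/2" for t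
  proof -
    have "0 \<le> (\<bar>g t\<bar> - \<epsilon>)\<^sup>2" by simp
    then have "2*\<epsilon>*\<bar>g t\<bar> \<le> (g t)\<^sup>2 + \<epsilon>*\<epsilon>" by (simp add: power2_eq_square algebra_simps)
    then show ?thesis using \<open>\<epsilon> > 0\<close> by (simp add: field_simps)
  qed
  have "\<bar>u y - u x\<bar> \<le> (\<integral>t. \<bar>I t * g t\<bar> \<partial>lborel)"
    unfolding gI(2) by (rule integral_abs_bound)
  also have "\<dots> \<le> (\<integral>t. (1/(2*\<epsilon>)) * (I t * (g t)\<^sup>2) + \<epsilon>/2 * I t \<partial>lborel)"
  proof (rule integral_mono)
    show "integrable lborel (\<lambda>t. (1/(2*\<epsilon>)) * (I t * (g t)\<^sup>2) + \<epsilon>/2 * I t)"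
      using g2I I(1) by simp
    show "\<bar>I t * g t\<bar> \<le> (1/(2*\<epsilon>)) * (I t * (g t)\<^sup>2) + \<epsilon>/2 * I t" for t
      using am_gm[of t] by (auto simp: I_def indicator_def)
  qed (use gI(1) in simp)
  also have "\<dots> = (1/(2*\<epsilon>)) * (\<integral>t. I t * (g t)\<^sup>2 \<partial>lborel) + \<epsilon>*(y-x)/2"
    using g2I I by simp
  also have "\<dots> \<le> G/(2*\<epsilon>) + \<epsilon>*(y-x)/2"
  proof -
    have "(\<integral>t. I t * (g t)\<^sup>2 \<partial>lborel) \<le> G"
      using integral_mono[OF g2I g2] G by (force simp: I_def indicator_def)
    then show ?thesis using \<open>\<epsilon> > 0\<close> by (simp add: divide_right_mono)
  qed
  finally show ?thesis .
qed

lemma weak_deriv_increment_sqrt_le: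
  assumes W: "weak_deriv u g" and g2: "integrable lborel (\<lambda>x. (g x)\<^sup>2)"
    and G: "(\<integral>x. (g x)\<^sup>2 \<partial>lborel) \<le> G"
  shows "\<bar>u y - u x\<bar> \<le> (G+1)/2 * sqrt \<bar>y - x\<bar>"
proof -
  have ordered: "\<bar>u y - u x\<bar> \<le> (G+1)/2 * sqrt (y - x)" if "x < y" for x y
  proof -
    define r where "r = sqrt (y - x)"
    have r: "r > 0" "y - x = r * r" using that unfolding r_def by auto
    have "\<bar>u y - u x\<bar> \<le> G/(2 * (1/r)) + (1/r)*(y-x)/2"
      using that r by (intro weak_deriv_increment_le[OF W g2 G]) auto
    also have "\<dots> = (G+1)/2 * r"
      using r by (simp add: field_simps)
    finally show ?thesis unfolding r_def .
  qed
  consider "x < y" | "x = y" | "y < x" by linarith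
  then show ?thesis
    using ordered[of x y] ordered[of y x] by cases (auto simp: abs_minus_commute)
qed

section \<open>Moving the peak\<close>

lemma lborel_integral_affine_comp:
  fixes F :: "real \<Rightarrow> real"
  assumes "integrable lborel F" and "\<alpha> > 0"
  shows "integrable lborel (\<lambda>x. F (\<alpha>*x+\<beta>))"
    and "(\<integral>x. F (\<alpha>*x+\<beta>) \<partial>lborel) = (\<integral>x. F x \<partial>lborel) / \<alpha>"
  using lborel_integrable_real_affine_iff[of \<alpha> F \<beta>] lborel_integral_real_affine[of \<alpha> F \<beta>] assms
  by (simp_all add: field_simps)

lemma affine_mem_Ioc_iff:
  fixes \<alpha> :: real
  assumes "\<alpha> > 0"
  shows "\<alpha>*x+\<beta> \<in> {\<alpha>*p+\<beta><..\<alpha>*q+\<beta>} \<longleftrightarrow> x \<in> {p<..q}"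
  using assms by auto

text \<open>Composing with \<open>stretch a b\<close> moves the point where \<open>u\<close> attains its maximum from \<open>a\<close> to
  \<open>b\<close> and leaves \<open>u\<close> unchanged outside \<open>[a-1,a+1]\<close>.\<close>
definition stretch :: "real \<Rightarrow> real \<Rightarrow> real \<Rightarrow> real" where
  "stretch a b x =
     (if x \<le> a-1 then x
      else if x \<le> b then a - 1 + (x - (a-1)) / (1 + (b-a))
      else if x \<le> a+1 then a + (x - b) / (1 - (b-a))
      else x)"

definition stretch_slope :: "real \<Rightarrow> real \<Rightarrow> real \<Rightarrow> real" where
  "stretch_slope a b x =
     (if x \<le> a-1 then 1
      else if x \<le> b then 1 / (1 + (b-a))
      else if x \<le> a+1 then 1 / (1 - (b-a))
      else 1)"

lemma stretch_measurable [measurable]: "stretch a b \<in> borel_measurable borel"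
  unfolding stretch_def by measurable

lemma stretch_slope_measurable [measurable]: "stretch_slope a b \<in> borel_measurable borel"
  unfolding stretch_slope_def by measurable

lemma stretch_at: "\<bar>b - a\<bar> < 1 \<Longrightarrow> stretch a b b = a"
  by (simp add: stretch_def)

lemma stretch_eq_self:
  assumes "\<bar>b - a\<bar> < 1" and "x \<notin> {a-1<..<a+1}"
  shows "stretch a b x = x"
proof -
  have "a + 1 - b = 1 - (b - a)" "1 - (b - a) \<noteq> 0" using assms(1) by auto
  then show ?thesis using assms by (auto simp: stretch_def)
qed

lemma stretch_displacement:
  assumes "\<bar>b - a\<bar> < 1"
  shows "\<bar>stretch a b x - x\<bar> \<le> \<bar>b - a\<bar>"
proof -
  define d where "d = b - a"
  have d: "0 < 1 + d" "0 < 1 - d" using assms unfolding d_def by auto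
  consider "x \<le> a-1 \<or> a+1 < x" | "a-1 < x" "x \<le> b" | "b < x" "x \<le> a+1" by linarith
  then show ?thesis
  proof cases
    case 2
    define t where "t = (x - (a-1)) / (1 + d)"
    have "stretch a b x - x = - d * t" "0 \<le> t" "t \<le> 1"
      using 2 d by (auto simp: stretch_def d_def t_def field_simps)
    then show ?thesis unfolding d_def[symmetric] by (simp add: abs_mult mult_left_le)
  next
    case 3
    define t where "t = ((a+1) - x) / (1 - d)"
    have "stretch a b x - x = - d * t" "0 \<le> t" "t \<le> 1"
      using 3 d by (auto simp: stretch_def d_def t_def field_simps)
    then show ?thesis unfolding d_def[symmetric] by (simp add: abs_mult mult_left_le)
  qed (use assms in \<open>auto simp: stretch_def\<close>)
qed

lemma stretch_affine_pieces:
  assumes "\<bar>b - a\<bar> < 1"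
  obtains \<alpha>1 \<beta>1 \<alpha>2 \<beta>2 :: real
  where "\<And>x. x \<in> {a-1..b} \<Longrightarrow> stretch a b x = \<alpha>1*x+\<beta>1" and "\<alpha>1 = 1 / (1 + (b-a))"
    and "\<And>x. x \<in> {b..a+1} \<Longrightarrow> stretch a b x = \<alpha>2*x+\<beta>2" and "\<alpha>2 = 1 / (1 - (b-a))"
proof -
  define \<alpha>1 \<beta>1 \<alpha>2 \<beta>2 where "\<alpha>1 = 1 / (1 + (b-a))" and "\<beta>1 = (a-1) - \<alpha>1*(a-1)"
    and "\<alpha>2 = 1 / (1 - (b-a))" and "\<beta>2 = a - \<alpha>2*b"
  have affine1: "\<alpha>1*x+\<beta>1 = a - 1 + (x - (a-1)) / (1 + (b-a))" for x
    by (simp add: \<alpha>1_def \<beta>1_def algebra_simps add_divide_distrib diff_divide_distrib)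
  have affine2: "\<alpha>2*x+\<beta>2 = a + (x - b) / (1 - (b-a))" for x
    by (simp add: \<alpha>2_def \<beta>2_def algebra_simps add_divide_distrib diff_divide_distrib)
  show ?thesis
  proof (rule that[of \<alpha>1 \<beta>1 \<alpha>2 \<beta>2])
    show "stretch a b x = \<alpha>1*x+\<beta>1" if "x \<in> {a-1..b}" for x
      using that unfolding affine1 by (auto simp: stretch_def)
    show "stretch a b x = \<alpha>2*x+\<beta>2" if "x \<in> {b..a+1}" for x
      using that assms stretch_at[OF assms] unfolding affine2 by (auto simp: stretch_def)
  qed (simp_all add: \<alpha>1_def \<alpha>2_def)
qed

lemma weak_deriv_comp_stretch:
  assumes W: "weak_deriv u g" and d: "\<bar>b - a\<bar> < 1"
  shows "weak_deriv (\<lambda>x. u (stretch a b x)) (\<lambda>x. stretch_slope a b x * g (stretch a b x))"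
proof -
  obtain \<alpha>1 \<beta>1 \<alpha>2 \<beta>2
    where left: "\<And>x. x \<in> {a-1..b} \<Longrightarrow> stretch a b x = \<alpha>1*x+\<beta>1" and \<alpha>1: "\<alpha>1 = 1 / (1 + (b-a))"
      and right: "\<And>x. x \<in> {b..a+1} \<Longrightarrow> stretch a b x = \<alpha>2*x+\<beta>2" and \<alpha>2: "\<alpha>2 = 1 / (1 - (b-a))"
    using stretch_affine_pieces[OF d] by metis
  have [measurable]: "g \<in> borel_measurable borel" using W unfolding weak_deriv_def by auto
  have Wu: "weak_deriv_on u g UNIV" using W weak_deriv_iff_on_UNIV by auto
  have pos: "\<alpha>1 > 0" "\<alpha>2 > 0" using d \<alpha>1 \<alpha>2 by auto
  show ?thesis
  proof (rule weak_deriv_from_pieces[of _ _ "a-1" b "a+1"])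
    show "weak_deriv_on (\<lambda>x. u (stretch a b x)) (\<lambda>x. stretch_slope a b x * g (stretch a b x)) {..a-1}"
      by (rule weak_deriv_on_cong[OF weak_deriv_on_subset[OF Wu], of _ _ "{}"])
        (auto simp: stretch_def stretch_slope_def)
    show "weak_deriv_on (\<lambda>x. u (stretch a b x)) (\<lambda>x. stretch_slope a b x * g (stretch a b x)) {a-1..b}"
      by (rule weak_deriv_on_cong[OF weak_deriv_on_subset[OF weak_deriv_on_affine_comp[OF Wu pos(1), of \<beta>1]],
            of _ _ "{a-1}"])
        (auto simp: left stretch_slope_def \<alpha>1 \<alpha>2)
    show "weak_deriv_on (\<lambda>x. u (stretch a b x)) (\<lambda>x. stretch_slope a b x * g (stretch a b x)) {b..a+1}"
      by (rule weak_deriv_on_cong[OF weak_deriv_on_subset[OF weak_deriv_on_affine_comp[OF Wu pos(2), of \<beta>2]],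
            of _ _ "{b}"])
        (use d in \<open>auto simp: right stretch_slope_def \<alpha>1 \<alpha>2\<close>)
    show "weak_deriv_on (\<lambda>x. u (stretch a b x)) (\<lambda>x. stretch_slope a b x * g (stretch a b x)) {a+1..}"
      by (rule weak_deriv_on_cong[OF weak_deriv_on_subset[OF Wu], of _ _ "{a+1}"])
        (use d stretch_eq_self[OF d] in \<open>auto simp: stretch_slope_def\<close>)
  qed (use d in auto)
qed

lemma stretch_deriv_energy:
  assumes g2: "integrable lborel (\<lambda>x. (g x)\<^sup>2)" and [measurable]: "g \<in> borel_measurable borel"
    and d: "\<bar>b - a\<bar> < 1"
  shows "integrable lborel (\<lambda>x. (stretch_slope a b x * g (stretch a b x))\<^sup>2)"
    and "(\<integral>x. (stretch_slope a b x * g (stretch a b x))\<^sup>2 \<partial>lborel)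
           \<le> (\<integral>x. (g x)\<^sup>2 \<partial>lborel) / (1 - \<bar>b - a\<bar>)"
proof -
  obtain \<alpha>1 \<beta>1 \<alpha>2 \<beta>2
    where left: "\<And>x. x \<in> {a-1..b} \<Longrightarrow> stretch a b x = \<alpha>1*x+\<beta>1" and \<alpha>1: "\<alpha>1 = 1 / (1 + (b-a))"
      and right: "\<And>x. x \<in> {b..a+1} \<Longrightarrow> stretch a b x = \<alpha>2*x+\<beta>2" and \<alpha>2: "\<alpha>2 = 1 / (1 - (b-a))"
    using stretch_affine_pieces[OF d] by metis
  have pos: "\<alpha>1 > 0" "\<alpha>2 > 0" using d \<alpha>1 \<alpha>2 by auto
  have ends: "\<alpha>1*(a-1)+\<beta>1 = a-1" "\<alpha>1*b+\<beta>1 = a" "\<alpha>2*b+\<beta>2 = a" "\<alpha>2*(a+1)+\<beta>2 = a+1"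
    using left[of "a-1"] left[of b] right[of b] right[of "a+1"] d
      stretch_at[OF d] stretch_eq_self[OF d, of "a-1"] stretch_eq_self[OF d, of "a+1"] by auto
  define F1 where "F1 y = indicator {a-1<..a} y * (g y)\<^sup>2" for y
  define F2 where "F2 y = indicator {a<..a+1} y * (g y)\<^sup>2" for y
  define T where "T y = indicator (- {a-1<..a+1}) y * (g y)\<^sup>2" for y
  have int: "integrable lborel F1" "integrable lborel F2" "integrable lborel T"
    unfolding F1_def F2_def T_def using integrable_mult_indicator[OF _ g2] by simp_all
  note comp = lborel_integral_affine_comp[OF int(1) pos(1)] lborel_integral_affine_comp[OF int(2) pos(2)]
  have F1_comp: "F1 (\<alpha>1*x+\<beta>1) = indicator {a-1<..b} x * (g (\<alpha>1*x+\<beta>1))\<^sup>2" for x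
    using affine_mem_Ioc_iff[OF pos(1), of x \<beta>1 "a-1" b] unfolding ends F1_def by (simp add: indicator_def)
  have F2_comp: "F2 (\<alpha>2*x+\<beta>2) = indicator {b<..a+1} x * (g (\<alpha>2*x+\<beta>2))\<^sup>2" for x
    using affine_mem_Ioc_iff[OF pos(2), of x \<beta>2 b "a+1"] unfolding ends F2_def by (simp add: indicator_def)
  have split: "(stretch_slope a b x * g (stretch a b x))\<^sup>2
      = T x + \<alpha>1\<^sup>2 * F1 (\<alpha>1*x+\<beta>1) + \<alpha>2\<^sup>2 * F2 (\<alpha>2*x+\<beta>2)" for x
    using d stretch_eq_self[OF d, of x] left[of x] right[of x]
    unfolding F1_comp F2_comp T_def
    by (auto simp: indicator_def power_mult_distrib stretch_slope_def \<alpha>1[symmetric] \<alpha>2[symmetric])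
  show "integrable lborel (\<lambda>x. (stretch_slope a b x * g (stretch a b x))\<^sup>2)"
    unfolding split using int comp by simp
  have "(\<integral>x. (stretch_slope a b x * g (stretch a b x))\<^sup>2 \<partial>lborel)
      = (\<integral>x. T x \<partial>lborel) + \<alpha>1 * (\<integral>x. F1 x \<partial>lborel) + \<alpha>2 * (\<integral>x. F2 x \<partial>lborel)"
    unfolding split using int comp pos by (simp add: power2_eq_square)
  also have "\<dots> = (\<integral>x. T x + \<alpha>1 * F1 x + \<alpha>2 * F2 x \<partial>lborel)"
    using int by simp
  also have "\<dots> \<le> (\<integral>x. 1 / (1 - \<bar>b - a\<bar>) * (g x)\<^sup>2 \<partial>lborel)"
  proof (rule integral_mono)
    have weights: "1 \<le> 1 / (1 - \<bar>b - a\<bar>)" "\<alpha>1 \<le> 1 / (1 - \<bar>b - a\<bar>)" "\<alpha>2 \<le> 1 / (1 - \<bar>b - a\<bar>)"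
      using d unfolding \<alpha>1 \<alpha>2 by (auto intro!: divide_left_mono)
    have scale: "c * (g x)\<^sup>2 \<le> 1 / (1 - \<bar>b - a\<bar>) * (g x)\<^sup>2" if "c \<le> 1 / (1 - \<bar>b - a\<bar>)" for c x
      using that by (rule mult_right_mono) simp
    show "T x + \<alpha>1 * F1 x + \<alpha>2 * F2 x \<le> 1 / (1 - \<bar>b - a\<bar>) * (g x)\<^sup>2" for x
      using scale[OF weights(1)] scale[OF weights(2)] scale[OF weights(3)]
      unfolding T_def F1_def F2_def by (auto simp: indicator_def)
  qed (use int g2 in simp_all)
  finally show "(\<integral>x. (stretch_slope a b x * g (stretch a b x))\<^sup>2 \<partial>lborel)
      \<le> (\<integral>x. (g x)\<^sup>2 \<partial>lborel) / (1 - \<bar>b - a\<bar>)"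
    by simp
qed

lemma Kset_comp_stretch:
  assumes uK: "u \<in> Kset a" and d: "\<bar>b - a\<bar> < 1"
  shows "(\<lambda>x. u (stretch a b x)) \<in> Kset b"
    and "grad_energy (\<lambda>x. u (stretch a b x)) \<le> grad_energy u / (1 - \<bar>b - a\<bar>)"
proof -
  define v where "v = (\<lambda>x. u (stretch a b x))"
  define gv where "gv x = stretch_slope a b x * wderiv u (stretch a b x)" for x
  have uH: "u \<in> H1" and ua: "u a = 1" and ub: "\<And>x. \<bar>u x\<bar> \<le> 1"
    using uK unfolding Kset_def by auto
  have [measurable]: "u \<in> borel_measurable borel" and u2: "integrable lborel (\<lambda>x. (u x)\<^sup>2)"
    using uH unfolding H1_def by auto
  note Wu = H1_wderiv[OF uH]
  have g_meas [measurable]: "wderiv u \<in> borel_measurable borel"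
    using Wu(1) unfolding weak_deriv_def by auto
  have Wv: "weak_deriv v gv"
    unfolding v_def gv_def by (rule weak_deriv_comp_stretch[OF Wu(1) d])
  note energy = stretch_deriv_energy[OF Wu(2) g_meas d, folded gv_def]
  have "(v x)\<^sup>2 \<le> (u x)\<^sup>2 + indicator {a-1..a+1} x" for x
  proof (cases "x \<in> {a-1..a+1}")
    case True
    have "(v x)\<^sup>2 \<le> 1" using ub[of "stretch a b x"] unfolding v_def by (simp add: abs_square_le_1)
    then have "(v x)\<^sup>2 \<le> (u x)\<^sup>2 + 1" by (intro add_increasing) auto
    then show ?thesis using True by simp
  next
    case False
    then have "v x = u x" using stretch_eq_self[OF d, of x] unfolding v_def by auto
    then show ?thesis by simp
  qed
  note pointwise = this
  have v_meas [measurable]: "v \<in> borel_measurable borel" unfolding v_def by measurable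
  have v2: "integrable lborel (\<lambda>x. (v x)\<^sup>2)"
  proof (rule Bochner_Integration.integrable_bound)
    show "integrable lborel (\<lambda>x. (u x)\<^sup>2 + indicator {a-1..a+1} x)"
      using u2 by (simp add: integrable_indicator_iff emeasure_lborel_Icc_eq less_top[symmetric])
    show "AE x in lborel. norm ((v x)\<^sup>2) \<le> norm ((u x)\<^sup>2 + indicat_real {a-1..a+1} x)"
      using pointwise by (intro AE_I2) simp
  qed simp
  have vH: "v \<in> H1"
    unfolding H1_def mem_Collect_eq using Wv energy(1) by (intro conjI v_meas v2 exI[of _ gv]) auto
  show "(\<lambda>x. u (stretch a b x)) \<in> Kset b"
    using vH ub ua stretch_at[OF d] unfolding Kset_def v_def by auto
  have "grad_energy v \<le> grad_energy u / (1 - \<bar>b - a\<bar>)"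
    using grad_energy_eq[OF vH Wv] energy(2) by linarith
  then show "grad_energy (\<lambda>x. u (stretch a b x)) \<le> grad_energy u / (1 - \<bar>b - a\<bar>)"
    unfolding v_def .
qed

lemma tent_in_Kset: "(\<lambda>x. max 0 (1 - \<bar>x - a\<bar>)) \<in> Kset a"
proof -
  define T where "T x = max 0 (1 - \<bar>x - a\<bar>)" for x :: real
  define gT where "gT x = (if a-1 < x \<and> x \<le> a then 1 else if a < x \<and> x \<le> a+1 then -1 else (0::real))" for x
  have [measurable]: "T \<in> borel_measurable borel" "gT \<in> borel_measurable borel"
    unfolding T_def gT_def by measurable
  have W: "weak_deriv T gT"
  proof (rule weak_deriv_from_pieces[of _ _ "a-1" a "a+1"])
    show "weak_deriv_on T gT {..a-1}"
      by (rule weak_deriv_on_cong[OF weak_deriv_on_subset[OF weak_deriv_on_affine[of 0 0]], of _ _ "{}"])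
        (auto simp: T_def gT_def)
    show "weak_deriv_on T gT {a-1..a}"
      by (rule weak_deriv_on_cong[OF weak_deriv_on_subset[OF weak_deriv_on_affine[of 1 "1-a"]], of _ _ "{a-1}"])
        (auto simp: T_def gT_def)
    show "weak_deriv_on T gT {a..a+1}"
      by (rule weak_deriv_on_cong[OF weak_deriv_on_subset[OF weak_deriv_on_affine[of "-1" "1+a"]], of _ _ "{a}"])
        (auto simp: T_def gT_def)
    show "weak_deriv_on T gT {a+1..}"
      by (rule weak_deriv_on_cong[OF weak_deriv_on_subset[OF weak_deriv_on_affine[of 0 0]], of _ _ "{a+1}"])
        (auto simp: T_def gT_def)
  qed auto
  have I: "integrable lborel (indicat_real {a-1..a+1})"
    by (simp add: integrable_indicator_iff emeasure_lborel_Icc_eq less_top[symmetric])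
  have "integrable lborel (\<lambda>x. (T x)\<^sup>2)" "integrable lborel (\<lambda>x. (gT x)\<^sup>2)"
    by (rule Bochner_Integration.integrable_bound[OF I];
        auto simp: T_def gT_def indicator_def abs_square_le_1)+
  then have "T \<in> H1" unfolding H1_def using W by auto
  then show ?thesis unfolding Kset_def T_def by auto
qed

lemma Kset_comp_stretch_sq_diff:
  assumes uK: "u \<in> Kset a" and d: "\<bar>b - a\<bar> < 1" and G: "grad_energy u \<le> G"
  shows "\<bar>(u (stretch a b x))\<^sup>2 - (u x)\<^sup>2\<bar> \<le> (G+1) * sqrt \<bar>b - a\<bar>"
proof -
  have uH: "u \<in> H1" and ub: "\<And>x. \<bar>u x\<bar> \<le> 1" using uK unfolding Kset_def by auto
  have "0 \<le> G" by (rule order_trans[OF _ G]) simp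
  then have G1: "0 \<le> (G+1)/2" by simp
  have "\<bar>u (stretch a b x) - u x\<bar> \<le> (G+1)/2 * sqrt \<bar>stretch a b x - x\<bar>"
    using weak_deriv_increment_sqrt_le[OF H1_wderiv[OF uH] G] .
  also have "\<dots> \<le> (G+1)/2 * sqrt \<bar>b - a\<bar>"
    using G1 stretch_displacement[OF d, of x] by (intro mult_left_mono) auto
  finally have close: "\<bar>u (stretch a b x) - u x\<bar> \<le> (G+1)/2 * sqrt \<bar>b - a\<bar>" .
  have "\<bar>(u (stretch a b x))\<^sup>2 - (u x)\<^sup>2\<bar> = \<bar>u (stretch a b x) - u x\<bar> * \<bar>u (stretch a b x) + u x\<bar>"
    by (simp add: power2_eq_square abs_mult[symmetric] algebra_simps)
  also have "\<dots> \<le> (G+1)/2 * sqrt \<bar>b - a\<bar> * 2"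
    using close ub[of x] ub[of "stretch a b x"] G1 by (intro mult_mono) auto
  finally show ?thesis by simp
qed

section \<open>Continuity of \<open>F\<close>\<close>

lemma finite_measure_integral_abs_le:
  fixes f :: "real \<Rightarrow> real"
  assumes "sets M = sets borel" and "finite_measure M"
    and "f \<in> borel_measurable borel" and "\<And>x. \<bar>f x\<bar> \<le> B"
  shows "integrable M f" and "\<bar>\<integral>x. f x \<partial>M\<bar> \<le> B * measure M UNIV"
proof -
  have f_meas: "f \<in> borel_measurable M"
    unfolding measurable_cong_sets[OF assms(1) refl, of borel] by (rule assms(3))
  show f_int: "integrable M f"
    by (rule finite_measure.integrable_const_bound[OF assms(2) _ f_meas, of B]) (use assms(4) in auto)
  have "\<bar>\<integral>x. f x \<partial>M\<bar> \<le> (\<integral>x. B \<partial>M)"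
    using f_int assms(2,4) by (intro integral_abs_bound_integral) (auto intro: finite_measure.integrable_const)
  also have "\<dots> = B * measure M UNIV" using sets_eq_imp_space_eq[OF assms(1)] by simp
  finally show "\<bar>\<integral>x. f x \<partial>M\<bar> \<le> B * measure M UNIV" .
qed

lemma divide_one_minus_le:
  fixes X G t :: real
  assumes "0 \<le> X" "X \<le> G" "0 \<le> t" "t \<le> 1/2"
  shows "X / (1 - t) \<le> X + 2 * G * sqrt t"
proof -
  have sqrt_t: "t \<le> sqrt t"
    using mult_left_le_one_le[of t t] assms(3,4) by (intro real_le_rsqrt) (simp add: power2_eq_square)
  have "0 \<le> t * (1 - 2*t)" using assms(3,4) by (intro mult_nonneg_nonneg) auto
  then have "t / (1 - t) \<le> 2 * t" using assms(4) by (simp add: divide_le_eq algebra_simps)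
  then have "X / (1 - t) \<le> X + 2 * t * X"
    using assms(1,4) mult_right_mono[of "t / (1 - t)" "2 * t" X] by (simp add: field_simps)
  also have "2 * t * X \<le> 2 * sqrt t * G"
    using assms sqrt_t by (intro mult_mono) auto
  finally show ?thesis by (simp add: algebra_simps)
qed

text \<open>Only \<open>V0 \<ge> 0\<close> a.e. is needed below (it bounds \<open>F\<close> from below).\<close>
locale bounded_potential =
  fixes V0 :: "real \<Rightarrow> real" and M1 M2 :: "real measure" and C :: real
  assumes V0_measurable [measurable]: "V0 \<in> borel_measurable borel"
    and V0_le: "AE x in lborel. \<bar>V0 x\<bar> \<le> C" and C_nonneg: "0 \<le> C"
    and V0_nonneg: "AE x in lborel. 0 \<le> V0 x"
    and sets_M1: "sets M1 = sets borel" and sets_M2: "sets M2 = sets borel"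
    and finite_M1: "finite_measure M1" and finite_M2: "finite_measure M2"
begin

lemma integrable_V0_sq:
  assumes [measurable]: "u \<in> borel_measurable borel" and u2: "integrable lborel (\<lambda>x. (u x)\<^sup>2)"
  shows "integrable lborel (\<lambda>x. V0 x * u x * u x)"
proof (rule Bochner_Integration.integrable_bound)
  show "integrable lborel (\<lambda>x. C * (u x)\<^sup>2)" using u2 by simp
  show "AE x in lborel. norm (V0 x * u x * u x) \<le> norm (C * (u x)\<^sup>2)"
    using V0_le
  proof eventually_elim
    case (elim x)
    have "norm (V0 x * u x * u x) = \<bar>V0 x\<bar> * (u x)\<^sup>2" by (simp add: abs_mult power2_eq_square)
    also have "\<dots> \<le> C * (u x)\<^sup>2" using elim by (intro mult_right_mono) auto
    finally show ?case using C_nonneg by simp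
  qed
qed simp

lemma Vform_ge:
  assumes "u \<in> Kset a"
  shows "- measure M2 UNIV \<le> Vform V0 M1 M2 u u"
proof -
  have "u \<in> H1" and ub: "\<And>x. \<bar>u x\<bar> \<le> 1" using assms unfolding Kset_def by auto
  then have [measurable]: "u \<in> borel_measurable borel" unfolding H1_def by auto
  have "0 \<le> (\<integral>x. V0 x * u x * u x \<partial>lborel)"
    using V0_nonneg
    by (intro integral_nonneg_AE) (auto elim!: eventually_mono simp: mult.assoc intro: mult_nonneg_nonneg)
  moreover have "0 \<le> (\<integral>x. u x * u x \<partial>M1)" by (intro integral_nonneg_AE) auto
  moreover have "\<bar>\<integral>x. u x * u x \<partial>M2\<bar> \<le> 1 * measure M2 UNIV"
    using ub by (intro finite_measure_integral_abs_le(2)[OF sets_M2 finite_M2])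
      (auto simp: abs_square_le_1 power2_eq_square[symmetric])
  ultimately show ?thesis unfolding Vform_def by linarith
qed

lemma Ifun_ge:
  assumes "u \<in> Kset a"
  shows "- measure M2 UNIV \<le> Ifun u V0 M1 M2"
proof -
  have "0 \<le> grad_energy u" by simp
  then show ?thesis using Vform_ge[OF assms] unfolding Ifun_def by linarith
qed

lemma grad_energy_le_Ifun: "u \<in> Kset a \<Longrightarrow> grad_energy u \<le> Ifun u V0 M1 M2 + measure M2 UNIV"
  using Vform_ge[of u a] unfolding Ifun_def by linarith

lemma Ffun_le_Ifun: "u \<in> Kset a \<Longrightarrow> Ffun a V0 M1 M2 \<le> Ifun u V0 M1 M2"
  unfolding Ffun_def using Ifun_ge by (intro cINF_lower) (auto simp: bdd_below_def)

lemma Ffun_ge: "- measure M2 UNIV \<le> Ffun a V0 M1 M2"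
  unfolding Ffun_def using tent_in_Kset[of a] Ifun_ge by (intro cINF_greatest) auto

lemma Ffun_approx:
  assumes "\<eta> > 0"
  obtains u where "u \<in> Kset a" and "Ifun u V0 M1 M2 < Ffun a V0 M1 M2 + \<eta>"
proof -
  have "\<not> (\<forall>u\<in>Kset a. Ffun a V0 M1 M2 + \<eta> \<le> Ifun u V0 M1 M2)"
  proof
    assume "\<forall>u\<in>Kset a. Ffun a V0 M1 M2 + \<eta> \<le> Ifun u V0 M1 M2"
    then have "Ffun a V0 M1 M2 + \<eta> \<le> Ffun a V0 M1 M2"
      unfolding Ffun_def using tent_in_Kset[of a] by (intro cINF_greatest) auto
    then show False using assms by simp
  qed
  then show ?thesis using that by (auto simp: not_le)
qed


abbreviation V_bound :: real where
  "V_bound \<equiv> 2*C + measure M1 UNIV + measure M2 UNIV"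

lemma Vform_diff_le:
  assumes u: "u \<in> H1" "\<And>x. \<bar>u x\<bar> \<le> 1" and v: "v \<in> H1" "\<And>x. \<bar>v x\<bar> \<le> 1"
    and outside: "\<And>x. x \<notin> {a-1..a+1} \<Longrightarrow> v x = u x"
    and close: "\<And>x. \<bar>(v x)\<^sup>2 - (u x)\<^sup>2\<bar> \<le> \<delta>"
  shows "Vform V0 M1 M2 v v - Vform V0 M1 M2 u u \<le> \<delta> * V_bound"
proof -
  have [measurable]: "u \<in> borel_measurable borel" "v \<in> borel_measurable borel"
    and u2: "integrable lborel (\<lambda>x. (u x)\<^sup>2)" and v2: "integrable lborel (\<lambda>x. (v x)\<^sup>2)"
    using u v unfolding H1_def by auto
  have close': "\<bar>v x * v x - u x * u x\<bar> \<le> \<delta>" for x using close[of x] by (simp add: power2_eq_square)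
  have "(\<integral>x. V0 x * v x * v x \<partial>lborel) - (\<integral>x. V0 x * u x * u x \<partial>lborel)
      = (\<integral>x. V0 x * v x * v x - V0 x * u x * u x \<partial>lborel)"
    using integrable_V0_sq[OF _ u2] integrable_V0_sq[OF _ v2] by simp
  also have "\<dots> \<le> (\<integral>x. C * \<delta> * indicator {a-1..a+1} x \<partial>lborel)"
  proof (rule integral_mono_AE)
    show "AE x in lborel. V0 x * v x * v x - V0 x * u x * u x \<le> C * \<delta> * indicator {a-1..a+1} x"
      using V0_le
    proof eventually_elim
      case (elim x)
      have "V0 x * v x * v x - V0 x * u x * u x \<le> \<bar>V0 x\<bar> * \<bar>v x * v x - u x * u x\<bar>"
        by (simp add: abs_mult[symmetric] algebra_simps)
      also have "\<dots> \<le> C * \<delta>" using elim close'[of x] by (intro mult_mono) auto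
      finally show ?case using outside[of x] by (auto simp: indicator_def)
    qed
  qed (use integrable_V0_sq[OF _ u2] integrable_V0_sq[OF _ v2] in
        \<open>simp_all add: integrable_indicator_iff emeasure_lborel_Icc_eq less_top[symmetric]\<close>)
  also have "\<dots> = 2 * C * \<delta>" by simp
  finally have V0_part: "(\<integral>x. V0 x * v x * v x \<partial>lborel) - (\<integral>x. V0 x * u x * u x \<partial>lborel) \<le> 2 * C * \<delta>" .
  have mass_part: "\<bar>(\<integral>x. v x * v x \<partial>M) - (\<integral>x. u x * u x \<partial>M)\<bar> \<le> \<delta> * measure M UNIV"
    if "sets M = sets borel" "finite_measure M" for M
  proof -
    have sq: "\<bar>v x * v x\<bar> \<le> 1" "\<bar>u x * u x\<bar> \<le> 1" for x
      using u(2)[of x] v(2)[of x] by (simp_all add: abs_square_le_1 power2_eq_square[symmetric])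
    have "integrable M (\<lambda>x. v x * v x)" "integrable M (\<lambda>x. u x * u x)"
      by (rule finite_measure_integral_abs_le(1)[OF that], use sq in auto)+
    moreover have "\<bar>\<integral>x. v x * v x - u x * u x \<partial>M\<bar> \<le> \<delta> * measure M UNIV"
      using close' by (intro finite_measure_integral_abs_le(2)[OF that]) auto
    ultimately show ?thesis by simp
  qed
  show ?thesis
    using V0_part mass_part[OF sets_M1 finite_M1] mass_part[OF sets_M2 finite_M2]
    unfolding Vform_def by (simp add: algebra_simps abs_le_iff)
qed

definition holder_coeff :: "real \<Rightarrow> real" where
  "holder_coeff G = 2*G + (G+1) * V_bound"

lemma V_bound_nonneg: "0 \<le> V_bound"
  using C_nonneg by simp

lemma holder_coeff_mono: "G \<le> G' \<Longrightarrow> holder_coeff G \<le> holder_coeff G'"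
  unfolding holder_coeff_def using V_bound_nonneg by (intro add_mono mult_right_mono) auto

lemma holder_coeff_nonneg: "0 \<le> G \<Longrightarrow> 0 \<le> holder_coeff G"
  unfolding holder_coeff_def using V_bound_nonneg by simp

lemma Ifun_comp_stretch_le:
  assumes uK: "u \<in> Kset a" and d: "\<bar>b - a\<bar> \<le> 1/2" and G: "grad_energy u \<le> G"
  shows "Ifun (\<lambda>x. u (stretch a b x)) V0 M1 M2
           \<le> Ifun u V0 M1 M2 + holder_coeff G * sqrt \<bar>b - a\<bar>"
proof -
  define v where "v = (\<lambda>x. u (stretch a b x))"
  have d': "\<bar>b - a\<bar> < 1" using d by simp
  have vK: "v \<in> Kset b" unfolding v_def by (rule Kset_comp_stretch(1)[OF uK d'])
  have "grad_energy v \<le> grad_energy u / (1 - \<bar>b - a\<bar>)"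
    unfolding v_def by (rule Kset_comp_stretch(2)[OF uK d'])
  also have "\<dots> \<le> grad_energy u + 2 * G * sqrt \<bar>b - a\<bar>"
    using G d by (intro divide_one_minus_le) auto
  finally have grad_part: "grad_energy v \<le> grad_energy u + 2 * G * sqrt \<bar>b - a\<bar>" .
  have "Vform V0 M1 M2 v v - Vform V0 M1 M2 u u \<le> (G+1) * sqrt \<bar>b - a\<bar> * V_bound"
    using uK vK stretch_eq_self[OF d'] Kset_comp_stretch_sq_diff[OF uK d' G]
    unfolding Kset_def v_def by (intro Vform_diff_le[where a = a]) auto
  with grad_part show ?thesis
    unfolding Ifun_def v_def holder_coeff_def by (simp add: algebra_simps)
qed


lemma Ffun_le_nearby:
  assumes d: "\<bar>b - a\<bar> \<le> 1/2"
  shows "Ffun b V0 M1 M2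
           \<le> Ffun a V0 M1 M2 + holder_coeff (Ffun a V0 M1 M2 + measure M2 UNIV + 1) * sqrt \<bar>b - a\<bar>"
proof (rule field_le_epsilon)
  fix e :: real assume "e > 0"
  then obtain u where uK: "u \<in> Kset a" and uI: "Ifun u V0 M1 M2 < Ffun a V0 M1 M2 + min e 1"
    using Ffun_approx[of "min e 1" a] by auto
  have G: "grad_energy u \<le> Ffun a V0 M1 M2 + measure M2 UNIV + 1"
    using grad_energy_le_Ifun[OF uK] uI by linarith
  have "Ffun b V0 M1 M2 \<le> Ifun (\<lambda>x. u (stretch a b x)) V0 M1 M2"
    using d by (intro Ffun_le_Ifun Kset_comp_stretch(1)[OF uK]) auto
  also have "\<dots> \<le> Ifun u V0 M1 M2 + holder_coeff (Ffun a V0 M1 M2 + measure M2 UNIV + 1) * sqrt \<bar>b - a\<bar>"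
    by (rule Ifun_comp_stretch_le[OF uK d G])
  finally show "Ffun b V0 M1 M2
      \<le> Ffun a V0 M1 M2 + holder_coeff (Ffun a V0 M1 M2 + measure M2 UNIV + 1) * sqrt \<bar>b - a\<bar> + e"
    using uI by linarith
qed

lemma Ffun_local_sqrt_holder:
  obtains L where "\<And>b. \<bar>b - a\<bar> \<le> 1/2 \<Longrightarrow> \<bar>Ffun b V0 M1 M2 - Ffun a V0 M1 M2\<bar> \<le> L * sqrt \<bar>b - a\<bar>"
proof -
  define F where "F x = Ffun x V0 M1 M2" for x
  define m where "m = measure M2 UNIV"
  define L0 where "L0 = holder_coeff (F a + m + 1)"
  define L where "L = holder_coeff (F a + L0 + m + 1)"
  have F_ge: "- m \<le> F x" for x unfolding F_def m_def by (rule Ffun_ge)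
  have L0: "0 \<le> L0" unfolding L0_def using F_ge[of a] by (intro holder_coeff_nonneg) simp
  have "\<bar>F b - F a\<bar> \<le> L * sqrt \<bar>b - a\<bar>" if d: "\<bar>b - a\<bar> \<le> 1/2" for b
  proof -
    have s: "0 \<le> sqrt \<bar>b - a\<bar>" "sqrt \<bar>b - a\<bar> \<le> 1" using d by auto
    have up: "F b \<le> F a + L0 * sqrt \<bar>b - a\<bar>"
      using Ffun_le_nearby[OF d] unfolding F_def L0_def m_def .
    also have "\<dots> \<le> F a + L0" using L0 s mult_left_le[of _ L0] by simp
    finally have "F b + m + 1 \<le> F a + L0 + m + 1" by simp
    then have "holder_coeff (F b + m + 1) * sqrt \<bar>b - a\<bar> \<le> L * sqrt \<bar>b - a\<bar>"
      unfolding L_def using s(1) by (intro mult_right_mono holder_coeff_mono) auto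
    moreover have "F a \<le> F b + holder_coeff (F b + m + 1) * sqrt \<bar>b - a\<bar>"
      using Ffun_le_nearby[of a b] d unfolding F_def m_def by (simp add: abs_minus_commute)
    ultimately have "F a \<le> F b + L * sqrt \<bar>b - a\<bar>" by linarith
    moreover have "L0 * sqrt \<bar>b - a\<bar> \<le> L * sqrt \<bar>b - a\<bar>"
      using L0 s(1) unfolding L0_def L_def by (intro mult_right_mono holder_coeff_mono) auto
    ultimately show ?thesis using up by linarith
  qed
  then show ?thesis using that unfolding F_def by blast
qed

theorem Ffun_continuous: "continuous_on UNIV (\<lambda>a. Ffun a V0 M1 M2)"
proof (intro continuous_at_imp_continuous_on ballI)
  fix a :: real
  obtain L where L: "\<And>b. \<bar>b - a\<bar> \<le> 1/2 \<Longrightarrow> \<bar>Ffun b V0 M1 M2 - Ffun a V0 M1 M2\<bar> \<le> L * sqrt \<bar>b - a\<bar>"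
    using Ffun_local_sqrt_holder by blast
  have "((\<lambda>b. Ffun b V0 M1 M2 - Ffun a V0 M1 M2) \<longlongrightarrow> 0) (at a)"
  proof (rule Lim_null_comparison)
    show "\<forall>\<^sub>F b in at a. norm (Ffun b V0 M1 M2 - Ffun a V0 M1 M2) \<le> L * sqrt \<bar>b - a\<bar>"
      unfolding eventually_at_le using L by (intro exI[of _ "1/2"]) (auto simp: dist_real_def)
    have "((\<lambda>b. L * sqrt \<bar>b - a\<bar>) \<longlongrightarrow> L * sqrt \<bar>a - a\<bar>) (at a)"
      by (intro tendsto_intros)
    then show "((\<lambda>b. L * sqrt \<bar>b - a\<bar>) \<longlongrightarrow> 0) (at a)" by simp
  qed
  then show "isCont (\<lambda>a. Ffun a V0 M1 M2) a"
    unfolding isCont_def by (rule LIM_zero_cancel)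
qed

end

theorem theorem5p5:
  fixes V0 :: "real \<Rightarrow> real" and M1 M2 :: "real measure"
  assumes "V0 \<in> borel_measurable borel"
    and "\<exists>C. AE x in lborel. \<bar>V0 x\<bar> \<le> C"
    and "\<exists>c>0. AE x in lborel. c \<le> V0 x"
    and "sets M1 = sets borel" and "sets M2 = sets borel"
    and "finite_measure M1" and "finite_measure M2"
  shows "continuous_on UNIV (\<lambda>a. Ffun a V0 M1 M2)"
proof -
  obtain C where "AE x in lborel. \<bar>V0 x\<bar> \<le> C" using assms(2) by blast
  then have bounded: "AE x in lborel. \<bar>V0 x\<bar> \<le> max C 0" by eventually_elim auto
  obtain c where c: "c > 0" and lower: "AE x in lborel. c \<le> V0 x" using assms(3) by blast
  have nonneg: "AE x in lborel. 0 \<le> V0 x"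
    using lower by (rule eventually_mono) (use c in auto)
  interpret bounded_potential V0 M1 M2 "max C 0"
    by (rule bounded_potential.intro) (fact assms(1) bounded nonneg assms(4-7) max.cobounded2)+
  show ?thesis by (rule Ffun_continuous)
qed

end
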